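(* Consider the hybrid system $\mathcal H$ described in the context (with arbitrary design choices $\alpha_i\in\mathcal K_\infty$, $c_i\ge0$, $b_i\in[0,1]$, $\sigma_i\ge0$, $\varepsilon_i>0$), and suppose Assumption 2 holds. Let $q=(x,z,e,\eta)$ be a solution of $\mathcal H$ for some input $w\in\mathcal L_{\mathcal W}$, and let $i\in\{1,\dots,N\}$. If there exists $(t,j)\in\operatorname{dom}q$ such that $$|e_i(t',j')|<\gamma_i^{-1}(\varepsilon_i)\quad\text{for all }(t',j')\in\operatorname{dom}q\text{ with }t'+j'\ge t+j,$$ then $\sup\{k\in\mathbb Z_{\ge0}:\exists s,\ (s,k)\in\mathcal T_i(q)\}<\infty$. Moreover, if such a condition holds for every $i\in\{1,\dots,N\}$, then $\sup\{k\in\mathbb Z_{\ge0}:\exists s,\ (s,k)\in\operatorname{dom}q\}<\infty$.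
   Context: Notation: $\mathcal K_\infty$ is the class of continuous, strictly increasing, unbounded functions $\mathbb R_{\ge0}\to\mathbb R_{\ge0}$ vanishing at $0$; $|\cdot|$ is the Euclidean norm. For $S\subseteq\mathbb R^m$, $\mathcal L_S$ is the set of Lebesgue measurable, locally essentially bounded functions $\mathbb R_{\ge0}\to S$. Plant: $\dot x=f_p(x,u,v)$, $y=h(x)$, $x\in\mathbb R^{n_x}$, $u\in\mathcal L_{\mathcal U}$, $v\in\mathcal L_{\mathcal V}$, $\mathcal U\subseteq\mathbb R^{n_u}$, $\mathcal V\subseteq\mathbb R^{n_v}$; $f_p$ locally Lipschitz in $x$, continuous in the others; $h$ continuously differentiable. Output split into $N\in\{1,\dots,n_y\}$ nodes $y=(h_1(x),\dots,h_N(x))$, $y_i\in\mathbb R^{n_{y_i}}$. Observer data: continuous $f_o:\mathbb R^{n_z}\times\mathbb R^{n_u}\times\mathbb R^{n_y}\times\mathbb R^{n_y}\to\mathbb R^{n_z}$ ($n_z\ge n_x$), $\psi:\mathbb R^{n_z}\to\mathbb R^{n_x}$ with right inverse $\psi^{-R}$; the observer has access to $u$ at all times (Assumption 1). Assumption 2: there exist $\underline\alpha,\overline\alpha,\alpha,\gamma_1,\dots,\gamma_N,\theta\in\mathcal K_\infty$ and continuously differentiable $V:\mathbb R^{n_x}\times\mathbb R^{n_z}\to\mathbb R_{\ge0}$ such that for all $x,z$, $u\in\mathcal U$, $v\in\mathcal V$, $e=(e_1,\dots,e_N)\in\mathbb R^{n_y}$ ($e_i\in\mathbb R^{n_{y_i}}$),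 $\hat y\in\mathbb R^{n_y}$: $\underline\alpha(|x-\psi(z)|)\le V(x,z)\le\overline\alpha(|\psi^{-R}(x)-z|)$ and $\langle\nabla V(x,z),(f_p(x,u,v),f_o(z,u,h(x)+e,\hat y))\rangle\le-\alpha(V(x,z))+\sum_i\gamma_i(|e_i|)+\theta(|v|)$. Hybrid system $\mathcal H$: state $q=(x,z,e,\eta)\in\mathcal Q:=\mathbb R^{n_x}\times\mathbb R^{n_z}\times\mathbb R^{n_y}\times\mathbb R^N_{\ge0}$, input $w=(u,v)\in\mathcal W:=\mathcal U\times\mathcal V$. Flow map $F(q,w):=(f_p(x,u,v),f_o(z,u,h(x)+e,h(\psi(z))),g_1,\dots,g_N,\ell_1,\dots,\ell_N)$, $g_i=-\frac{\partial h_i(x)}{\partial x}f_p(x,u,v)$, $\ell_i=-\alpha_i(\eta_i)+c_i\gamma_i(|e_i|)$. $\mathcal C:=\bigcap_i\{q:\gamma_i(|e_i|)\le\sigma_i\alpha_i(\eta_i)+\varepsilon_i\}$, $\mathcal D:=\bigcup_i\mathcal D_i$, $\mathcal D_i:=\{q:\gamma_i(|e_i|)\ge\sigma_i\alpha_i(\eta_i)+\varepsilon_i\}$. $G(q):=\bigcup_iG_i(q)$, $G_i(q)=\emptyset$ if $q\notin\mathcal D_i$, else $G_i(q)=\{(x,z,e',\eta')\}$ with $e'_i=0,\eta'_i=b_i\eta_i$ and $e'_j=e_j,\eta'_j=\eta_j$ for $j\ne i$. Dynamics: $\dot q=F(q,w)$, $q\in\mathcal C$; $q^+\in G(q)$,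 $q\in\mathcal D$. Solutions: a hybrid time domain is a set $E\subset\mathbb R_{\ge0}\times\mathbb Z_{\ge0}$ such that each truncation $E\cap([0,T]\times\{0,\dots,J\})$, $(T,J)\in E$, equals $\bigcup_j([t_j,t_{j+1}],j)$ for finitely many $0=t_0\le t_1\le\dots$. A hybrid arc $q$ (with $q(\cdot,j)$ locally absolutely continuous) is a solution for input $w\in\mathcal L_{\mathcal W}$ if for each $j$ with $I^j:=\{t:(t,j)\in\operatorname{dom}q\}$ of nonempty interior, $\dot q(t,j)=F(q(t,j),w(t))$ and $q(t,j)\in\mathcal C$ for a.a. $t\in I^j$, and whenever $(t,j),(t,j+1)\in\operatorname{dom}q$, $q(t,j)\in\mathcal D$ and $q(t,j+1)\in G(q(t,j))$. For a solution $q$, $\mathcal T_i(q):=\{(t,j)\in\operatorname{dom}q:q(t,j)\in\mathcal D_i\text{ and }q(t,j+1)\in G_i(q(t,j))\}$. *)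

theory Defs
  imports "HOL-Analysis.Analysis"
begin

definition class_Kinf :: "(real \<Rightarrow> real) \<Rightarrow> bool" where
  "class_Kinf f \<longleftrightarrow> continuous_on {0..} f \<and> strict_mono_on {0..} f \<and> f 0 = 0
     \<and> f ` {0..} \<subseteq> {0..} \<and> \<not> bdd_above (f ` {0..})"

definition Kinf_inv :: "(real \<Rightarrow> real) \<Rightarrow> real \<Rightarrow> real" where
  "Kinf_inv f y = the_inv_into {0..} f y"

definition Linf_loc :: "'a::euclidean_space set \<Rightarrow> (real \<Rightarrow> 'a) set" where
  "Linf_loc S = {w. w \<in> borel_measurable (restrict_space lebesgue {0..})
      \<and> (\<forall>t\<ge>0. w t \<in> S)
      \<and> (\<forall>T\<ge>0. \<exists>B. AE t in lebesgue. t \<in> {0..T} \<longrightarrow> norm (w t) \<le> B)}"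

definition abs_cont_on :: "real \<Rightarrow> real \<Rightarrow> (real \<Rightarrow> 'a::real_normed_vector) \<Rightarrow> bool" where
  "abs_cont_on lo hi f \<longleftrightarrow> (\<forall>\<epsilon>>0. \<exists>\<delta>>0. \<forall>(n::nat) (a::nat\<Rightarrow>real) b.
      (\<forall>k<n. lo \<le> a k \<and> a k \<le> b k \<and> b k \<le> hi)
      \<and> (\<forall>k<n. \<forall>l<n. k \<noteq> l \<longrightarrow> b k \<le> a l \<or> b l \<le> a k)
      \<and> (\<Sum>k<n. b k - a k) < \<delta>
      \<longrightarrow> (\<Sum>k<n. norm (f (b k) - f (a k))) < \<epsilon>)"

definition loc_abs_cont_on :: "real set \<Rightarrow> (real \<Rightarrow> 'a::real_normed_vector) \<Rightarrow> bool" where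
  "loc_abs_cont_on I f \<longleftrightarrow> (\<forall>lo hi. {lo..hi} \<subseteq> I \<longrightarrow> abs_cont_on lo hi f)"

definition hybrid_time_domain :: "(real \<times> nat) set \<Rightarrow> bool" where
  "hybrid_time_domain E \<longleftrightarrow> E \<subseteq> {0..} \<times> UNIV \<and>
     (\<forall>(T,J)\<in>E. \<exists>ts::nat \<Rightarrow> real. ts 0 = 0 \<and> (\<forall>j\<le>J. ts j \<le> ts (Suc j)) \<and>
        E \<inter> ({0..T} \<times> {0..J}) = (\<Union>j\<in>{0..J}. {ts j..ts (Suc j)} \<times> {j}))"

definition Ij :: "(real \<times> nat) set \<Rightarrow> nat \<Rightarrow> real set" where
  "Ij E j = {t. (t, j) \<in> E}"

definition hybrid_arc :: "(real \<times> nat) set \<Rightarrow> (real \<Rightarrow> nat \<Rightarrow> 'a::real_normed_vector) \<Rightarrow> bool" where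
  "hybrid_arc E q \<longleftrightarrow> hybrid_time_domain E \<and> (\<forall>j. loc_abs_cont_on (Ij E j) (\<lambda>t. q t j))"

definition is_solution ::
  "('s::real_normed_vector \<Rightarrow> 'w \<Rightarrow> 's) \<Rightarrow> 's set \<Rightarrow> 's set \<Rightarrow> ('s \<Rightarrow> 's set)
   \<Rightarrow> (real \<Rightarrow> 'w) \<Rightarrow> (real \<times> nat) set \<Rightarrow> (real \<Rightarrow> nat \<Rightarrow> 's) \<Rightarrow> bool" where
  "is_solution F C D G w E q \<longleftrightarrow> hybrid_arc E q
     \<and> (\<forall>j. interior (Ij E j) \<noteq> {} \<longrightarrow>
          (AE t in lebesgue. t \<in> Ij E j \<longrightarrow>
             ((\<lambda>s. q s j) has_vector_derivative F (q t j) (w t)) (at t within Ij E j)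
             \<and> q t j \<in> C))
     \<and> (\<forall>t j. (t, j) \<in> E \<and> (t, Suc j) \<in> E \<longrightarrow> q t j \<in> D \<and> q t (Suc j) \<in> G (q t j))"

text \<open>Output coordinates (index type 'm, n_y = CARD('m)) are split into nodes
  (index type 'n, N = CARD('n)) by the map blk; e_i is the restriction of e to
  the coordinates k with blk k = i, and its Euclidean norm is blknorm.\<close>
definition blknorm :: "('m::finite \<Rightarrow> 'n) \<Rightarrow> real^'m \<Rightarrow> 'n \<Rightarrow> real" where
  "blknorm blk e i = sqrt (\<Sum>k\<in>{k. blk k = i}. (e $ k)\<^sup>2)"

type_synonym ('x,'z,'m,'n) hstate = "'x \<times> 'z \<times> (real^'m) \<times> (real^'n)"

definition Qset :: "('x,'z,'m::finite,'n::finite) hstate set" where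
  "Qset = {(x,z,e,\<eta>). \<forall>i. \<eta> $ i \<ge> 0}"

definition flowF ::
  "('x::real_normed_vector \<Rightarrow> 'u \<Rightarrow> 'v \<Rightarrow> 'x) \<Rightarrow> ('z \<Rightarrow> 'u \<Rightarrow> real^'m \<Rightarrow> real^'m \<Rightarrow> 'z)
   \<Rightarrow> ('x \<Rightarrow> real^'m::finite) \<Rightarrow> ('z \<Rightarrow> 'x) \<Rightarrow> ('m \<Rightarrow> 'n::finite)
   \<Rightarrow> ('n \<Rightarrow> real \<Rightarrow> real) \<Rightarrow> ('n \<Rightarrow> real) \<Rightarrow> ('n \<Rightarrow> real \<Rightarrow> real)
   \<Rightarrow> ('x,'z,'m,'n) hstate \<Rightarrow> 'u \<times> 'v \<Rightarrow> ('x,'z,'m,'n) hstate" where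
  "flowF fp fo h \<psi> blk \<alpha>d c \<gamma> = (\<lambda>(x,z,e,\<eta>) (u,v).
     (fp x u v,
      fo z u (h x + e) (h (\<psi> z)),
      - frechet_derivative h (at x) (fp x u v),
      \<chi> i. - \<alpha>d i (\<eta> $ i) + c i * \<gamma> i (blknorm blk e i)))"

definition flowC ::
  "('m::finite \<Rightarrow> 'n::finite) \<Rightarrow> ('n \<Rightarrow> real \<Rightarrow> real) \<Rightarrow> ('n \<Rightarrow> real) \<Rightarrow> ('n \<Rightarrow> real)
   \<Rightarrow> ('n \<Rightarrow> real \<Rightarrow> real) \<Rightarrow> ('x,'z,'m,'n) hstate set" where
  "flowC blk \<alpha>d \<sigma> \<epsilon> \<gamma> = {q \<in> Qset. case q of (x,z,e,\<eta>) \<Rightarrow>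
      (\<forall>i. \<gamma> i (blknorm blk e i) \<le> \<sigma> i * \<alpha>d i (\<eta> $ i) + \<epsilon> i)}"

definition jumpDi ::
  "('m::finite \<Rightarrow> 'n::finite) \<Rightarrow> ('n \<Rightarrow> real \<Rightarrow> real) \<Rightarrow> ('n \<Rightarrow> real) \<Rightarrow> ('n \<Rightarrow> real)
   \<Rightarrow> ('n \<Rightarrow> real \<Rightarrow> real) \<Rightarrow> 'n \<Rightarrow> ('x,'z,'m,'n) hstate set" where
  "jumpDi blk \<alpha>d \<sigma> \<epsilon> \<gamma> i = {q \<in> Qset. case q of (x,z,e,\<eta>) \<Rightarrow>
      \<gamma> i (blknorm blk e i) \<ge> \<sigma> i * \<alpha>d i (\<eta> $ i) + \<epsilon> i}"

definition jumpD ::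
  "('m::finite \<Rightarrow> 'n::finite) \<Rightarrow> ('n \<Rightarrow> real \<Rightarrow> real) \<Rightarrow> ('n \<Rightarrow> real) \<Rightarrow> ('n \<Rightarrow> real)
   \<Rightarrow> ('n \<Rightarrow> real \<Rightarrow> real) \<Rightarrow> ('x,'z,'m,'n) hstate set" where
  "jumpD blk \<alpha>d \<sigma> \<epsilon> \<gamma> = (\<Union>i. jumpDi blk \<alpha>d \<sigma> \<epsilon> \<gamma> i)"

definition jumpGi ::
  "('m::finite \<Rightarrow> 'n::finite) \<Rightarrow> ('n \<Rightarrow> real \<Rightarrow> real) \<Rightarrow> ('n \<Rightarrow> real) \<Rightarrow> ('n \<Rightarrow> real)
   \<Rightarrow> ('n \<Rightarrow> real \<Rightarrow> real) \<Rightarrow> ('n \<Rightarrow> real) \<Rightarrow> 'n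
   \<Rightarrow> ('x,'z,'m,'n) hstate \<Rightarrow> ('x,'z,'m,'n) hstate set" where
  "jumpGi blk \<alpha>d \<sigma> \<epsilon> \<gamma> b i q =
     (if q \<notin> jumpDi blk \<alpha>d \<sigma> \<epsilon> \<gamma> i then {}
      else (case q of (x,z,e,\<eta>) \<Rightarrow>
        {(x, z, \<chi> k. if blk k = i then 0 else e $ k,
                \<chi> l. if l = i then b i * \<eta> $ i else \<eta> $ l)}))"

definition jumpG ::
  "('m::finite \<Rightarrow> 'n::finite) \<Rightarrow> ('n \<Rightarrow> real \<Rightarrow> real) \<Rightarrow> ('n \<Rightarrow> real) \<Rightarrow> ('n \<Rightarrow> real)
   \<Rightarrow> ('n \<Rightarrow> real \<Rightarrow> real) \<Rightarrow> ('n \<Rightarrow> real)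
   \<Rightarrow> ('x,'z,'m,'n) hstate \<Rightarrow> ('x,'z,'m,'n) hstate set" where
  "jumpG blk \<alpha>d \<sigma> \<epsilon> \<gamma> b q = (\<Union>i. jumpGi blk \<alpha>d \<sigma> \<epsilon> \<gamma> b i q)"

definition jumpTimes ::
  "('m::finite \<Rightarrow> 'n::finite) \<Rightarrow> ('n \<Rightarrow> real \<Rightarrow> real) \<Rightarrow> ('n \<Rightarrow> real) \<Rightarrow> ('n \<Rightarrow> real)
   \<Rightarrow> ('n \<Rightarrow> real \<Rightarrow> real) \<Rightarrow> ('n \<Rightarrow> real) \<Rightarrow> 'n
   \<Rightarrow> (real \<times> nat) set \<Rightarrow> (real \<Rightarrow> nat \<Rightarrow> ('x,'z,'m,'n) hstate) \<Rightarrow> (real \<times> nat) set" where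
  "jumpTimes blk \<alpha>d \<sigma> \<epsilon> \<gamma> b i E q = {(t,j) \<in> E. (t, Suc j) \<in> E
      \<and> q t j \<in> jumpDi blk \<alpha>d \<sigma> \<epsilon> \<gamma> i
      \<and> q t (Suc j) \<in> jumpGi blk \<alpha>d \<sigma> \<epsilon> \<gamma> b i (q t j)}"

definition err_of :: "('x,'z,'m::finite,'n::finite) hstate \<Rightarrow> real^'m" where
  "err_of q = fst (snd (snd q))"

end

theory Submission
  imports Defs
begin

text \<open>If from hybrid time \<open>t + j\<close> on the error of node \<open>i\<close> stays below
  \<open>\<gamma>\<^sub>i\<^sup>-\<^sup>1(\<epsilon>\<^sub>i)\<close>, then \<open>\<gamma>\<^sub>i(|e\<^sub>i|) < \<epsilon>\<^sub>i \<le> \<sigma>\<^sub>i \<alpha>\<^sub>i(\<eta>\<^sub>i) + \<epsilon>\<^sub>i\<close>, so the state never lies in \<open>D\<^sub>i\<close> again and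
  every jump \<open>(s, k)\<close> of node \<open>i\<close> satisfies \<open>k \<le> s + k < t + j\<close>. Every jump of the
  hybrid system is a jump of one of the finitely many nodes, and every jump index
  \<open>k + 1\<close> of the domain is reached by a jump at index \<open>k\<close>; hence the jump count of the
  whole system is bounded as well.\<close>

lemma class_Kinf_onto:
  assumes "class_Kinf g" and "0 \<le> y"
  obtains x where "0 \<le> x" and "g x = y"
proof -
  from assms(1) have cont: "continuous_on {0..} g" and g0: "g 0 = 0"
    and unbdd: "\<not> bdd_above (g ` {0..})"
    unfolding class_Kinf_def by auto
  obtain a where "0 \<le> a" and "y \<le> g a"
    using unbdd by (meson atLeast_iff bdd_aboveI2 nle_le)
  then have "\<exists>x. 0 \<le> x \<and> x \<le> a \<and> g x = y"
    using assms(2) g0 by (intro IVT') (auto intro: continuous_on_subset[OF cont])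
  then show thesis using that by blast
qed

lemma less_Kinf_inv_iff:
  assumes K: "class_Kinf g" and "0 \<le> x" and "0 \<le> y"
  shows "x < Kinf_inv g y \<longleftrightarrow> g x < y"
proof -
  have mono: "strict_mono_on {0..} g" using K unfolding class_Kinf_def by simp
  obtain x' where "0 \<le> x'" and y: "g x' = y" using class_Kinf_onto[OF K \<open>0 \<le> y\<close>] .
  have "Kinf_inv g y = x'"
    unfolding Kinf_inv_def y[symmetric]
    using \<open>0 \<le> x'\<close> by (simp add: the_inv_into_f_f strict_mono_on_imp_inj_on[OF mono])
  moreover have "x < x' \<longleftrightarrow> g x < g x'"
    using strict_mono_on_less[OF mono] \<open>0 \<le> x\<close> \<open>0 \<le> x'\<close> by simp
  ultimately show ?thesis using y by simp
qed

lemma blknorm_nonneg: "0 \<le> blknorm blk e i"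
  unfolding blknorm_def by (simp add: sum_nonneg)

lemma notin_jumpDi_if_small_error:
  assumes "class_Kinf (\<gamma> i)" and "class_Kinf (\<alpha>d i)" and "0 \<le> \<sigma> i" and "0 < \<epsilon> i"
    and small: "blknorm blk (err_of p) i < Kinf_inv (\<gamma> i) (\<epsilon> i)"
  shows "p \<notin> jumpDi blk \<alpha>d \<sigma> \<epsilon> \<gamma> i"
proof
  assume "p \<in> jumpDi blk \<alpha>d \<sigma> \<epsilon> \<gamma> i"
  then obtain x z e \<eta> where p: "p = (x, z, e, \<eta>)" and "0 \<le> \<eta> $ i"
    and jump: "\<sigma> i * \<alpha>d i (\<eta> $ i) + \<epsilon> i \<le> \<gamma> i (blknorm blk e i)"
    unfolding jumpDi_def Qset_def by auto
  have "0 \<le> \<alpha>d i (\<eta> $ i)"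
    using \<open>class_Kinf (\<alpha>d i)\<close> \<open>0 \<le> \<eta> $ i\<close> unfolding class_Kinf_def by auto
  then have "0 \<le> \<sigma> i * \<alpha>d i (\<eta> $ i)"
    using \<open>0 \<le> \<sigma> i\<close> by simp
  then have "\<epsilon> i \<le> \<gamma> i (blknorm blk e i)"
    using jump by linarith
  moreover have "blknorm blk e i < Kinf_inv (\<gamma> i) (\<epsilon> i)"
    using small p by (simp add: err_of_def)
  then have "\<gamma> i (blknorm blk e i) < \<epsilon> i"
    using less_Kinf_inv_iff[OF \<open>class_Kinf (\<gamma> i)\<close> blknorm_nonneg[of blk e i]] \<open>0 < \<epsilon> i\<close>
    by simp
  ultimately show False by simp
qed

lemma bdd_above_indices_before:
  assumes "\<And>s k. (s, k) \<in> S \<Longrightarrow> 0 \<le> s \<and> s + real k < T"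
  shows "bdd_above {k. \<exists>s. (s, k) \<in> S}"
proof (rule bdd_aboveI)
  fix k assume "k \<in> {k. \<exists>s. (s, k) \<in> S}"
  then have "real k < T" using assms by fastforce
  then show "k \<le> nat \<lceil>T\<rceil>" by linarith
qed

lemma hybrid_time_domain_nonneg:
  "hybrid_time_domain E \<Longrightarrow> (t, j) \<in> E \<Longrightarrow> 0 \<le> t"
  unfolding hybrid_time_domain_def by auto

lemma hybrid_time_domain_jump_before:
  assumes "hybrid_time_domain E" and "(s, Suc j) \<in> E"
  obtains s' where "(s', j) \<in> E" and "(s', Suc j) \<in> E"
proof -
  from assms obtain ts :: "nat \<Rightarrow> real" where mono: "\<forall>l\<le>Suc j. ts l \<le> ts (Suc l)"
    and E: "E \<inter> ({0..s} \<times> {0..Suc j}) = (\<Union>l\<in>{0..Suc j}. {ts l..ts (Suc l)} \<times> {l})"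
    unfolding hybrid_time_domain_def by fastforce
  have "(ts (Suc j), l) \<in> (\<Union>l\<in>{0..Suc j}. {ts l..ts (Suc l)} \<times> {l})"
    if "l \<in> {j, Suc j}" for l
    using mono that by auto
  then show thesis using that E by blast
qed

lemma bdd_above_hybrid_time_domain_indices:
  assumes "hybrid_time_domain E" and "bdd_above B"
    and "\<And>t j. (t, j) \<in> E \<Longrightarrow> (t, Suc j) \<in> E \<Longrightarrow> j \<in> B"
  shows "bdd_above {k. \<exists>s. (s, k) \<in> E}"
proof -
  have "{k. \<exists>s. (s, k) \<in> E} \<subseteq> insert 0 (Suc ` B)"
  proof
    fix k assume "k \<in> {k. \<exists>s. (s, k) \<in> E}"
    then obtain s where "(s, k) \<in> E" by blast
    show "k \<in> insert 0 (Suc ` B)"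
    proof (cases k)
      case (Suc j)
      then obtain s' where "(s', j) \<in> E" and "(s', Suc j) \<in> E"
        using hybrid_time_domain_jump_before[OF assms(1)] \<open>(s, k) \<in> E\<close> by blast
      then show ?thesis using Suc assms(3) by blast
    qed simp
  qed
  moreover have "bdd_above (Suc ` B)"
    using \<open>bdd_above B\<close> by (simp add: bdd_above_image_mono mono_Suc)
  ultimately show ?thesis by (meson bdd_above_insert bdd_above_mono)
qed

lemma jump_in_some_jumpTimes:
  assumes "is_solution F C D (jumpG blk \<alpha>d \<sigma> \<epsilon> \<gamma> b) w E q"
    and "(t, j) \<in> E" and "(t, Suc j) \<in> E"
  obtains i where "(t, j) \<in> jumpTimes blk \<alpha>d \<sigma> \<epsilon> \<gamma> b i E q"
proof -
  have "q t (Suc j) \<in> jumpG blk \<alpha>d \<sigma> \<epsilon> \<gamma> b (q t j)"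
    using assms unfolding is_solution_def by simp
  then obtain i where "q t (Suc j) \<in> jumpGi blk \<alpha>d \<sigma> \<epsilon> \<gamma> b i (q t j)"
    unfolding jumpG_def by blast
  moreover from this have "q t j \<in> jumpDi blk \<alpha>d \<sigma> \<epsilon> \<gamma> i"
    unfolding jumpGi_def by (metis empty_iff)
  ultimately show thesis
    using that assms(2,3) unfolding jumpTimes_def by blast
qed

lemma bdd_above_jumpTimes_if_small_error:
  assumes "hybrid_time_domain E"
    and "class_Kinf (\<gamma> i)" and "class_Kinf (\<alpha>d i)" and "0 \<le> \<sigma> i" and "0 < \<epsilon> i"
    and small: "\<forall>(t', j')\<in>E. t + real j \<le> t' + real j' \<longrightarrow>
                  blknorm blk (err_of (q t' j')) i < Kinf_inv (\<gamma> i) (\<epsilon> i)"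
  shows "bdd_above {k. \<exists>s. (s, k) \<in> jumpTimes blk \<alpha>d \<sigma> \<epsilon> \<gamma> b i E q}"
proof (rule bdd_above_indices_before)
  fix s k assume "(s, k) \<in> jumpTimes blk \<alpha>d \<sigma> \<epsilon> \<gamma> b i E q"
  then have "(s, k) \<in> E" and "q s k \<in> jumpDi blk \<alpha>d \<sigma> \<epsilon> \<gamma> i"
    unfolding jumpTimes_def by auto
  then have "\<not> blknorm blk (err_of (q s k)) i < Kinf_inv (\<gamma> i) (\<epsilon> i)"
    using notin_jumpDi_if_small_error assms(2-5) by blast
  then have "\<not> t + real j \<le> s + real k"
    using small \<open>(s, k) \<in> E\<close> by blast
  then show "0 \<le> s \<and> s + real k < t + real j"
    using hybrid_time_domain_nonneg[OF assms(1) \<open>(s, k) \<in> E\<close>] by simp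
qed

theorem lemma1:
  fixes fp :: "'x::euclidean_space \<Rightarrow> 'u::euclidean_space \<Rightarrow> 'v::euclidean_space \<Rightarrow> 'x"
    and h :: "'x \<Rightarrow> real^'m::finite"
    and blk :: "'m \<Rightarrow> 'n::finite"
    and U :: "'u set" and Vs :: "'v set"
    and fo :: "'z::euclidean_space \<Rightarrow> 'u \<Rightarrow> real^'m \<Rightarrow> real^'m \<Rightarrow> 'z"
    and \<psi> :: "'z \<Rightarrow> 'x" and \<psi>R :: "'x \<Rightarrow> 'z"
    and \<alpha>d \<gamma> :: "'n \<Rightarrow> real \<Rightarrow> real" and c b \<sigma> \<epsilon> :: "'n \<Rightarrow> real"
    and \<alpha>lo \<alpha>hi \<alpha> \<theta> :: "real \<Rightarrow> real"
    and V :: "'x \<times> 'z \<Rightarrow> real" and V' :: "'x \<times> 'z \<Rightarrow> ('x \<times> 'z) \<Rightarrow>\<^sub>L real"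
    and w :: "real \<Rightarrow> 'u \<times> 'v"
    and E :: "(real \<times> nat) set" and q :: "real \<Rightarrow> nat \<Rightarrow> ('x,'z,'m,'n) hstate"
  assumes blk_surj: "surj blk" and dims: "DIM('x) \<le> DIM('z)"
    and fp_cont: "continuous_on (UNIV \<times> U \<times> Vs) (\<lambda>(x,u,v). fp x u v)"
    and fp_lip: "local_lipschitz (U \<times> Vs) UNIV (\<lambda>(u,v) x. fp x u v)"
    and h_C1: "\<exists>h'. (\<forall>x. (h has_derivative blinfun_apply (h' x)) (at x)) \<and> continuous_on UNIV h'"
    and fo_cont: "continuous_on UNIV (\<lambda>(z,u,y,yh). fo z u y yh)"
    and \<psi>R_right_inv: "\<And>x. \<psi> (\<psi>R x) = x"
    and design: "\<And>i. class_Kinf (\<alpha>d i) \<and> c i \<ge> 0 \<and> 0 \<le> b i \<and> b i \<le> 1 \<and> \<sigma> i \<ge> 0 \<and> \<epsilon> i > 0"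
    and A2_K: "class_Kinf \<alpha>lo" "class_Kinf \<alpha>hi" "class_Kinf \<alpha>" "class_Kinf \<theta>" "\<And>i. class_Kinf (\<gamma> i)"
    and A2_V_nonneg: "\<And>p. V p \<ge> 0"
    and A2_V_C1: "\<forall>p. (V has_derivative blinfun_apply (V' p)) (at p)" "continuous_on UNIV V'"
    and A2_sandwich: "\<And>x z. \<alpha>lo (norm (x - \<psi> z)) \<le> V (x, z) \<and> V (x, z) \<le> \<alpha>hi (norm (\<psi>R x - z))"
    and A2_decay: "\<And>x z u v e yh. u \<in> U \<Longrightarrow> v \<in> Vs \<Longrightarrow>
        blinfun_apply (V' (x, z)) (fp x u v, fo z u (h x + e) yh)
          \<le> - \<alpha> (V (x, z)) + (\<Sum>i\<in>UNIV. \<gamma> i (blknorm blk e i)) + \<theta> (norm v)"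
    and w_input: "w \<in> Linf_loc (U \<times> Vs)"
    and sol: "is_solution (flowF fp fo h \<psi> blk \<alpha>d c \<gamma>) (flowC blk \<alpha>d \<sigma> \<epsilon> \<gamma>)
                (jumpD blk \<alpha>d \<sigma> \<epsilon> \<gamma>) (jumpG blk \<alpha>d \<sigma> \<epsilon> \<gamma> b) w E q"
  shows "(\<forall>i. (\<exists>(t,j)\<in>E. \<forall>(t',j')\<in>E. t' + real j' \<ge> t + real j \<longrightarrow>
                 blknorm blk (err_of (q t' j')) i < Kinf_inv (\<gamma> i) (\<epsilon> i))
            \<longrightarrow> bdd_above {k. \<exists>s. (s, k) \<in> jumpTimes blk \<alpha>d \<sigma> \<epsilon> \<gamma> b i E q})
       \<and> ((\<forall>i. \<exists>(t,j)\<in>E. \<forall>(t',j')\<in>E. t' + real j' \<ge> t + real j \<longrightarrow>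
                 blknorm blk (err_of (q t' j')) i < Kinf_inv (\<gamma> i) (\<epsilon> i))
            \<longrightarrow> bdd_above {k. \<exists>s. (s, k) \<in> E})"
proof -
  let ?small = "\<lambda>i. \<exists>(t,j)\<in>E. \<forall>(t',j')\<in>E. t' + real j' \<ge> t + real j \<longrightarrow>
                 blknorm blk (err_of (q t' j')) i < Kinf_inv (\<gamma> i) (\<epsilon> i)"
  let ?jumps = "\<lambda>i. {k. \<exists>s. (s, k) \<in> jumpTimes blk \<alpha>d \<sigma> \<epsilon> \<gamma> b i E q}"
  have dom: "hybrid_time_domain E"
    using sol unfolding is_solution_def hybrid_arc_def by simp
  have node: "bdd_above (?jumps i)" if "?small i" for i
    using that design[of i] A2_K(5)[of i]
    by (auto intro: bdd_above_jumpTimes_if_small_error[OF dom])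
  moreover have "bdd_above {k. \<exists>s. (s, k) \<in> E}" if "\<forall>i. ?small i"
  proof (rule bdd_above_hybrid_time_domain_indices[OF dom])
    show "bdd_above (\<Union>i. ?jumps i)"
      using node that by simp
    show "j \<in> (\<Union>i. ?jumps i)" if "(t, j) \<in> E" and "(t, Suc j) \<in> E" for t j
      using jump_in_some_jumpTimes[OF sol that] by blast
  qed
  ultimately show ?thesis by blast
qed

end
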